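(* Let ${\mathcal M}$ be a GLP-algebra and $n<\omega$, and suppose ${\mathcal M}$ enjoys the $\langle n\rangle$-reduction property. Then for every $\phi\in{\mathcal M}$, $$\{Q_n^k(\phi):k<\omega\}\vdash_{\Pi_{n+1}({\mathcal M})}\langle n+1\rangle\phi,$$ i.e. for every $z\in\Pi_{n+1}({\mathcal M})$, if $\langle n+1\rangle\phi\le z$ then there is $k<\omega$ with $Q_n^k(\phi)\le z$.
   Context: A GLP-algebra is a boolean algebra ${\mathcal M}$ with unary operations $\langle n\rangle$, $n<\omega$, satisfying for all $x,y$: (i) $\langle n\rangle(x\vee y)=\langle n\rangle x\vee\langle n\rangle y$; (ii) $\langle n\rangle 0=0$; (iii) $\langle n\rangle x=\langle n\rangle(x\wedge\neg\langle n\rangle x)$; (iv) $\langle n\rangle x\le\langle m\rangle x$ for $m\le n$; (v) $\langle m\rangle x\le[n]\langle m\rangle x$ for $m<n$, where $[n]x:=\neg\langle n\rangle\neg x$. Define $Q_n^0(x)=\top$, $Q_n^{k+1}(x)=\langle n\rangle(x\wedge Q_n^k(x))$. For $A\subseteq{\mathcal M}$, $A\vdash x$ means there are $a_1,\dots,a_k\in A$ with $a_1\wedge\dots\wedge a_k\le x$; $A\vdash B$ means $A\vdash x$ for all $x\in B$; a single element stands for the singleton. $A\vdash_n B$ means: for all $z\in{\mathcal M}$, $B\vdash\langle n\rangle z$ implies $A\vdash\langle n\rangle z$. ${\mathcal M}$ enjoys the $\langle n\rangle$-reduction property if for all $x\in{\mathcal M}$, $\{Q_n^k(x):k<\omega\}\vdash_n\langle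 n+1\rangle x$. $\Pi_{n+1}({\mathcal M})$ is the closure under $\vee,\wedge$ of $\{\top,\bot\}\cup\{\langle k\rangle z:k\le n,z\in{\mathcal M}\}\cup\{[k]z:k<n,z\in{\mathcal M}\}$. $A\vdash_{\Pi_{n+1}({\mathcal M})}B$ means: for all $z\in\Pi_{n+1}({\mathcal M})$, $B\vdash z$ implies $A\vdash z$. *)

theory Defs
  imports Main
begin

definition box :: "(nat \<Rightarrow> 'a::boolean_algebra \<Rightarrow> 'a) \<Rightarrow> nat \<Rightarrow> 'a \<Rightarrow> 'a" where
  "box dia n x = - dia n (- x)"

definition glp_algebra :: "(nat \<Rightarrow> 'a::boolean_algebra \<Rightarrow> 'a) \<Rightarrow> bool" where
  "glp_algebra dia \<longleftrightarrow>
     (\<forall>n x y. dia n (sup x y) = sup (dia n x) (dia n y)) \<and>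
     (\<forall>n. dia n bot = bot) \<and>
     (\<forall>n x. dia n x = dia n (inf x (- dia n x))) \<and>
     (\<forall>m n x. m \<le> n \<longrightarrow> dia n x \<le> dia m x) \<and>
     (\<forall>m n x. m < n \<longrightarrow> dia m x \<le> box dia n (dia m x))"

primrec Q :: "(nat \<Rightarrow> 'a::boolean_algebra \<Rightarrow> 'a) \<Rightarrow> nat \<Rightarrow> nat \<Rightarrow> 'a \<Rightarrow> 'a" where
  "Q dia n 0 x = top"
| "Q dia n (Suc k) x = dia n (inf x (Q dia n k x))"

definition derives :: "'a::boolean_algebra set \<Rightarrow> 'a \<Rightarrow> bool" where
  "derives A x \<longleftrightarrow> (\<exists>as. set as \<subseteq> A \<and> foldr inf as top \<le> x)"

definition derives_set :: "'a::boolean_algebra set \<Rightarrow> 'a set \<Rightarrow> bool" where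
  "derives_set A B \<longleftrightarrow> (\<forall>x\<in>B. derives A x)"

definition derives_n :: "(nat \<Rightarrow> 'a::boolean_algebra \<Rightarrow> 'a) \<Rightarrow> nat \<Rightarrow> 'a set \<Rightarrow> 'a set \<Rightarrow> bool" where
  "derives_n dia n A B \<longleftrightarrow> (\<forall>z. derives B (dia n z) \<longrightarrow> derives A (dia n z))"

definition reduction_property :: "(nat \<Rightarrow> 'a::boolean_algebra \<Rightarrow> 'a) \<Rightarrow> nat \<Rightarrow> bool" where
  "reduction_property dia n \<longleftrightarrow>
     (\<forall>x. derives_n dia n {Q dia n k x | k. True} {dia (Suc n) x})"

inductive_set Pi_set :: "(nat \<Rightarrow> 'a::boolean_algebra \<Rightarrow> 'a) \<Rightarrow> nat \<Rightarrow> 'a set"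
  for dia :: "nat \<Rightarrow> 'a \<Rightarrow> 'a" and n :: nat where
  top_in: "top \<in> Pi_set dia n"
| bot_in: "bot \<in> Pi_set dia n"
| dia_in: "k \<le> n \<Longrightarrow> dia k z \<in> Pi_set dia n"
| box_in: "k < n \<Longrightarrow> box dia k z \<in> Pi_set dia n"
| sup_in: "x \<in> Pi_set dia n \<Longrightarrow> y \<in> Pi_set dia n \<Longrightarrow> sup x y \<in> Pi_set dia n"
| inf_in: "x \<in> Pi_set dia n \<Longrightarrow> y \<in> Pi_set dia n \<Longrightarrow> inf x y \<in> Pi_set dia n"

text \<open>Pi_set dia n is the set called Pi_{n+1}(M) in the paper.\<close>

definition derives_Pi :: "(nat \<Rightarrow> 'a::boolean_algebra \<Rightarrow> 'a) \<Rightarrow> nat \<Rightarrow> 'a set \<Rightarrow> 'a set \<Rightarrow> bool" where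
  "derives_Pi dia n A B \<longleftrightarrow> (\<forall>z\<in>Pi_set dia n. derives B z \<longrightarrow> derives A z)"

end

theory Submission
  imports Defs
begin

text \<open>Every element of \<open>\<Pi>\<^sub>n\<^sub>+\<^sub>1\<close> is a finite meet of clauses \<open>\<langle>n\<rangle>Z \<or> E\<close> whose
  complement \<open>C = \<not>E\<close> is stable: \<open>C \<le> [n]C\<close> and \<open>\<langle>n+1\<rangle>C \<le> C\<close>; this holds for
  \<open>\<langle>k\<rangle>z\<close> and \<open>[k]z\<close> with \<open>k < n\<close> by transitivity and axiom (v).  If \<open>\<langle>n+1\<rangle>\<phi>\<close> lies
  below such a clause, then \<open>\<langle>n+1\<rangle>(\<phi> \<and> C) \<le> \<langle>n\<rangle>Z\<close>, so reduction yields
  \<open>Q\<^sup>k(\<phi> \<and> C) \<le> \<langle>n\<rangle>Z\<close>; since \<open>C \<le> [n]C\<close>, the conjunct \<open>C\<close> can be pushed inside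
  every diamond, \<open>Q\<^sup>k(\<phi>) \<and> C \<le> Q\<^sup>k(\<phi> \<and> C)\<close>, whence \<open>Q\<^sup>k(\<phi>)\<close> lies below the clause.
  Finite meets are handled by monotonicity of \<open>Q\<^sup>k\<close> in \<open>k\<close>.\<close>

lemma derives_singleton_iff: "derives {a} z \<longleftrightarrow> a \<le> z"
proof
  assume "derives {a} z"
  then obtain as where "set as \<subseteq> {a}" "foldr inf as top \<le> z"
    unfolding derives_def by blast
  moreover from \<open>set as \<subseteq> {a}\<close> have "a \<le> foldr inf as top"
    by (induction as) auto
  ultimately show "a \<le> z" by (meson order_trans)
next
  assume "a \<le> z"
  then show "derives {a} z"
    unfolding derives_def by (intro exI[of _ "[a]"]) auto
qed

lemma derives_range_antimono_iff:
  fixes f :: "nat \<Rightarrow> 'a::boolean_algebra"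
  assumes "antimono f"
  shows "derives (range f) y \<longleftrightarrow> (\<exists>k. f k \<le> y)"
proof
  assume "derives (range f) y"
  then obtain as where as: "set as \<subseteq> range f" "foldr inf as top \<le> y"
    unfolding derives_def by blast
  from as(1) have "\<exists>k. f k \<le> foldr inf as top"
  proof (induction as)
    case Nil
    then show ?case by simp
  next
    case (Cons a as)
    then obtain i j where "a = f i" "f j \<le> foldr inf as top" by auto
    moreover have "f (max i j) \<le> f i" "f (max i j) \<le> f j"
      by (simp_all add: antimonoD[OF assms])
    ultimately have "f (max i j) \<le> a" "f (max i j) \<le> foldr inf as top"
      by (auto intro: order_trans)
    then show ?case by auto
  qed
  with as(2) show "\<exists>k. f k \<le> y" by (blast intro: order_trans)
next
  assume "\<exists>k. f k \<le> y"
  then obtain k where "f k \<le> y" ..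
  then show "derives (range f) y"
    unfolding derives_def by (intro exI[of _ "[f k]"]) auto
qed

definition stable :: "(nat \<Rightarrow> 'a::boolean_algebra \<Rightarrow> 'a) \<Rightarrow> nat \<Rightarrow> 'a \<Rightarrow> bool" where
  "stable dia n c \<longleftrightarrow> c \<le> box dia n c \<and> dia (Suc n) c \<le> c"

definition clauses :: "(nat \<Rightarrow> 'a::boolean_algebra \<Rightarrow> 'a) \<Rightarrow> nat \<Rightarrow> 'a set" where
  "clauses dia n = {sup (dia n Z) E | Z E. stable dia n (- E)}"

inductive_set clause_meets :: "(nat \<Rightarrow> 'a::boolean_algebra \<Rightarrow> 'a) \<Rightarrow> nat \<Rightarrow> 'a set"
  for dia n where
  top: "top \<in> clause_meets dia n"
| clause: "w \<in> clauses dia n \<Longrightarrow> w \<in> clause_meets dia n"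
| inf: "x \<in> clause_meets dia n \<Longrightarrow> y \<in> clause_meets dia n \<Longrightarrow> inf x y \<in> clause_meets dia n"

lemma dia_sup_in_clauses: "stable dia n (- E) \<Longrightarrow> sup (dia n Z) E \<in> clauses dia n"
  unfolding clauses_def by blast

context
  fixes dia :: "nat \<Rightarrow> 'a::boolean_algebra \<Rightarrow> 'a"
  assumes glp: "glp_algebra dia"
begin

lemma dia_sup: "dia n (sup x y) = sup (dia n x) (dia n y)"
  using glp unfolding glp_algebra_def by metis

lemma dia_bot: "dia n bot = bot"
  using glp unfolding glp_algebra_def by metis

lemma dia_loeb: "dia n x = dia n (inf x (- dia n x))"
  using glp unfolding glp_algebra_def by metis

lemma dia_antimono_index: "m \<le> n \<Longrightarrow> dia n x \<le> dia m x"
  using glp unfolding glp_algebra_def by metis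

lemma dia_le_box_dia: "m < n \<Longrightarrow> dia m x \<le> box dia n (dia m x)"
  using glp unfolding glp_algebra_def by metis

lemma dia_mono: "x \<le> y \<Longrightarrow> dia n x \<le> dia n y"
  by (metis dia_sup sup.absorb_iff2)

lemma box_mono: "x \<le> y \<Longrightarrow> box dia n x \<le> box dia n y"
  unfolding box_def by (simp add: dia_mono)

lemma box_mono_index: "m \<le> n \<Longrightarrow> box dia m x \<le> box dia n x"
  unfolding box_def by (simp add: dia_antimono_index)

lemma box_inf: "box dia n (inf x y) = inf (box dia n x) (box dia n y)"
  unfolding box_def by (simp add: dia_sup)

lemma box_top: "box dia n top = top"
  unfolding box_def by (simp add: dia_bot)

lemma box_inf_dia_le: "inf (box dia n x) (dia n y) \<le> dia n (inf x y)"
proof -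
  have "y \<le> sup (inf x y) (- x)"
    by (simp add: sup_inf_distrib2)
  then have "dia n y \<le> sup (dia n (inf x y)) (dia n (- x))"
    using dia_mono dia_sup by metis
  then show ?thesis
    unfolding box_def by (simp add: inf_commute shunt2 sup_commute)
qed

text \<open>As in GL, Loeb's axiom yields transitivity when applied to \<open>x \<and> [n]x\<close>.\<close>

lemma box_trans: "box dia n x \<le> box dia n (box dia n x)"
proof -
  define y where "y = inf x (box dia n x)"
  have loeb: "box dia n y = box dia n (sup y (- box dia n y))"
    using dia_loeb[of n "- y"] unfolding box_def by simp
  have "inf x (box dia n y) \<le> y"
    unfolding y_def by (simp add: box_mono le_infI2)
  then have "x \<le> sup y (- box dia n y)"
    by (simp add: shunt1 sup_commute)
  then have "box dia n x \<le> box dia n y"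
    using box_mono loeb by metis
  also have "\<dots> \<le> box dia n (box dia n x)"
    unfolding y_def by (simp add: box_mono)
  finally show ?thesis .
qed

lemma dia_trans: "dia n (dia n x) \<le> dia n x"
  using box_trans[of n "- x"] unfolding box_def by simp

lemma stable_top: "stable dia n top"
  unfolding stable_def by (simp add: box_top)

lemma stable_inf: "stable dia n a \<Longrightarrow> stable dia n b \<Longrightarrow> stable dia n (inf a b)"
  unfolding stable_def box_inf
  by (meson dia_mono inf.cobounded1 inf.cobounded2 inf_mono le_inf_iff order_trans)

lemma stable_dia: "k < n \<Longrightarrow> stable dia n (dia k x)"
  unfolding stable_def
  by (meson dia_le_box_dia dia_antimono_index dia_trans less_imp_le_nat le_SucI order_trans)

lemma stable_box: "k < n \<Longrightarrow> stable dia n (box dia k x)"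
proof -
  assume "k < n"
  then have "box dia k x \<le> box dia n (box dia k x)"
    by (meson box_trans box_mono_index less_imp_le order_trans)
  moreover from \<open>k < n\<close> have "dia (Suc n) (box dia k x) \<le> box dia k x"
    using dia_le_box_dia[of k "Suc n" "- x"] unfolding box_def
    by (simp add: compl_le_swap1)
  ultimately show ?thesis
    unfolding stable_def by simp
qed

lemma clauses_sup: "a \<in> clauses dia n \<Longrightarrow> b \<in> clauses dia n \<Longrightarrow> sup a b \<in> clauses dia n"
proof -
  assume "a \<in> clauses dia n" "b \<in> clauses dia n"
  then obtain Z1 E1 Z2 E2
    where "a = sup (dia n Z1) E1" "stable dia n (- E1)"
      and "b = sup (dia n Z2) E2" "stable dia n (- E2)"
    unfolding clauses_def by blast
  then have "sup a b = sup (dia n (sup Z1 Z2)) (sup E1 E2)"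
    and "stable dia n (- sup E1 E2)"
    by (simp_all add: dia_sup ac_simps stable_inf)
  then show ?thesis
    unfolding clauses_def by blast
qed

lemma clause_meets_sup_clause:
  "x \<in> clause_meets dia n \<Longrightarrow> c \<in> clauses dia n \<Longrightarrow> sup x c \<in> clause_meets dia n"
proof (induction x rule: clause_meets.induct)
  case (inf x y)
  then have "inf (sup x c) (sup y c) \<in> clause_meets dia n"
    by (simp add: clause_meets.inf)
  then show ?case
    by (simp only: sup_inf_distrib2)
qed (simp_all add: clause_meets.top clause_meets.clause clauses_sup)

lemma clause_meets_sup:
  "y \<in> clause_meets dia n \<Longrightarrow> x \<in> clause_meets dia n \<Longrightarrow> sup x y \<in> clause_meets dia n"
proof (induction y rule: clause_meets.induct)
  case (inf a b)
  then have "inf (sup x a) (sup x b) \<in> clause_meets dia n"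
    by (simp add: clause_meets.inf)
  then show ?case
    by (simp only: sup_inf_distrib1)
qed (simp_all add: clause_meets.top clause_meets_sup_clause)

lemma stable_compl_in_clauses: "stable dia n (- E) \<Longrightarrow> E \<in> clauses dia n"
  using dia_sup_in_clauses[of dia n E bot] by (simp add: dia_bot)

lemma Pi_set_subset_clause_meets: "z \<in> Pi_set dia n \<Longrightarrow> z \<in> clause_meets dia n"
proof (induction z rule: Pi_set.induct)
  case bot_in
  show ?case
    by (intro clause_meets.clause stable_compl_in_clauses) (simp add: stable_top)
next
  case (dia_in k z)
  show ?case
  proof (cases "k = n")
    case True
    then show ?thesis
      using dia_sup_in_clauses[of dia n bot z] by (simp add: stable_top clause_meets.clause)
  next
    case False
    with dia_in have "stable dia n (- dia k z)"
      using stable_box[of k n "- z"] unfolding box_def by simp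
    then show ?thesis
      by (intro clause_meets.clause stable_compl_in_clauses)
  qed
next
  case (box_in k z)
  then have "stable dia n (- box dia k z)"
    unfolding box_def by (simp add: stable_dia)
  then show ?case
    by (intro clause_meets.clause stable_compl_in_clauses)
qed (simp_all add: clause_meets.top clause_meets.inf clause_meets_sup)

lemma Q_antimono: "antimono (\<lambda>k. Q dia n k x)"
  unfolding antimono_iff_le_Suc
proof
  show "Q dia n (Suc k) x \<le> Q dia n k x" for k
    by (induction k) (auto intro!: dia_mono inf_mono)
qed

lemma Q_inf_le:
  assumes "c \<le> box dia n c"
  shows "inf (Q dia n k x) c \<le> Q dia n k (inf x c)"
proof (induction k)
  case 0
  then show ?case by simp
next
  case (Suc k)
  have "inf (Q dia n (Suc k) x) c \<le> inf (box dia n c) (dia n (inf x (Q dia n k x)))"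
    using assms by (simp add: le_infI2)
  also have "\<dots> \<le> dia n (inf c (inf x (Q dia n k x)))"
    by (rule box_inf_dia_le)
  also have "\<dots> \<le> dia n (inf (inf x c) (Q dia n k (inf x c)))"
  proof (rule dia_mono)
    have "inf c (inf x (Q dia n k x)) \<le> inf (Q dia n k x) c"
      by (meson inf.cobounded1 inf.cobounded2 le_inf_iff)
    also note Suc.IH
    finally show "inf c (inf x (Q dia n k x)) \<le> inf (inf x c) (Q dia n k (inf x c))"
      by (meson inf.cobounded1 inf.cobounded2 le_inf_iff)
  qed
  finally show ?case by simp
qed

lemma Q_le_clause:
  assumes "reduction_property dia n" and "w \<in> clauses dia n" and "dia (Suc n) \<phi> \<le> w"
  shows "\<exists>k. Q dia n k \<phi> \<le> w"
proof -
  obtain Z E where w: "w = sup (dia n Z) E" and "stable dia n (- E)"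
    using assms(2) unfolding clauses_def by blast
  then have C: "- E \<le> box dia n (- E)" "dia (Suc n) (- E) \<le> - E"
    unfolding stable_def by auto
  have "dia (Suc n) (inf \<phi> (- E)) \<le> inf w (- E)"
    using assms(3) C(2) dia_mono by (meson inf.cobounded1 inf.cobounded2 le_inf_iff order_trans)
  also have "\<dots> \<le> dia n Z"
    unfolding w by (simp add: shunt2)
  finally have "derives {dia (Suc n) (inf \<phi> (- E))} (dia n Z)"
    by (simp add: derives_singleton_iff)
  then have "derives {Q dia n k (inf \<phi> (- E)) | k. True} (dia n Z)"
    using assms(1) unfolding reduction_property_def derives_n_def by blast
  then obtain k where "Q dia n k (inf \<phi> (- E)) \<le> dia n Z"
    by (auto simp: full_SetCompr_eq derives_range_antimono_iff Q_antimono)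
  then have "inf (Q dia n k \<phi>) (- E) \<le> dia n Z"
    using Q_inf_le[OF C(1), of k \<phi>] by simp
  then have "Q dia n k \<phi> \<le> w"
    unfolding w by (simp add: shunt1 sup_commute)
  then show ?thesis ..
qed

lemma Q_le_clause_meets:
  assumes "reduction_property dia n" and "w \<in> clause_meets dia n" and "dia (Suc n) \<phi> \<le> w"
  shows "\<exists>k. Q dia n k \<phi> \<le> w"
  using assms(2,3)
proof (induction w rule: clause_meets.induct)
  case top
  show ?case by simp
next
  case (clause w)
  then show ?case
    using assms(1) Q_le_clause by blast
next
  case (inf x y)
  then obtain i j where "Q dia n i \<phi> \<le> x" "Q dia n j \<phi> \<le> y" by auto
  moreover have "Q dia n (max i j) \<phi> \<le> Q dia n i \<phi>" "Q dia n (max i j) \<phi> \<le> Q dia n j \<phi>"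
    by (simp_all add: antimonoD[OF Q_antimono])
  ultimately have "Q dia n (max i j) \<phi> \<le> inf x y"
    by (meson le_inf_iff order_trans)
  then show ?case ..
qed

end

theorem theorem2:
  fixes dia :: "nat \<Rightarrow> 'a::boolean_algebra \<Rightarrow> 'a" and n :: nat
  assumes "glp_algebra dia"
    and "reduction_property dia n"
  shows "\<forall>\<phi>. derives_Pi dia n {Q dia n k \<phi> | k. True} {dia (Suc n) \<phi>}"
  unfolding derives_Pi_def
proof (intro allI ballI impI)
  fix \<phi> z
  assume "z \<in> Pi_set dia n" and "derives {dia (Suc n) \<phi>} z"
  then have "z \<in> clause_meets dia n" and "dia (Suc n) \<phi> \<le> z"
    using Pi_set_subset_clause_meets[OF assms(1)] by (auto simp: derives_singleton_iff)
  then have "\<exists>k. Q dia n k \<phi> \<le> z"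
    using Q_le_clause_meets[OF assms] by blast
  then show "derives {Q dia n k \<phi> | k. True} z"
    by (simp add: full_SetCompr_eq derives_range_antimono_iff Q_antimono[OF assms(1)])
qed

end
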